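(* Let $f:\mathbb{R}^n\to\mathbb{R}$ be convex and $L$-smooth, $h$ proper closed convex with $\mathrm{dom}\, h\subset\mathrm{dom}\, f$, $\phi=f+h$, $\lambda>0$, $x_0\in\mathbb{R}^n$. Run the ACG method (see context) with this $x_0$, $g=f+\frac1{2\lambda}\|\cdot-x_0\|^2$, $\mu=1/\lambda$, $\psi=\phi+\frac1{2\lambda}\|\cdot-x_0\|^2$. For $j\ge1$ let $\hat x_j=\mathrm{argmin}_{u\in\mathbb{R}^n}\Gamma_j(u)$ and $v_j=(x_0-x_j)/A_j$. If $j\ge1$ and $A_j\ge3\lambda$, then (a) $\psi(y_j)-\Gamma_j(\hat x_j)\le\frac{1}{2A_j}\|\hat x_j-x_0\|^2\le\frac{1}{A_j-2\lambda}\|y_j-x_0\|^2$; (b) $\|v_j\|\le\frac{3\|y_j-x_0\|}{2A_j}$.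
   Context: $\ell_g(u;x)=g(x)+\langle\nabla g(x),u-x\rangle$. ACG method for $\min\psi=g+h$ ($g$ $\mu$-strongly convex, $(L+\mu)$-smooth): $A_0=0$, $\tau_0=1/L$, $y_0=x_0$; for $j\ge0$: $a_j=\frac{\tau_j+\sqrt{\tau_j^2+4\tau_jA_j}}{2}$, $\tau_{j+1}=\tau_j+\mu a_j/L$, $A_{j+1}=A_j+a_j$, $\tilde x_j=\frac{A_j}{A_{j+1}}y_j+\frac{a_j}{A_{j+1}}x_j$; $\tilde y_{j+1}=\mathrm{argmin}_u\{\ell_g(u;\tilde x_j)+h(u)+\frac{L+\mu}{2}\|u-\tilde x_j\|^2\}$; $y_{j+1}\in\mathrm{Argmin}\{\psi(u):u\in\{y_j,\tilde y_{j+1}\}\}$; $x_{j+1}=\frac{(L+\mu)a_j\tilde y_{j+1}-\frac{A_ja_jL}{A_{j+1}}y_j}{A_{j+1}\mu+1}$. Further $\tilde\gamma_j(u)=\ell_g(u;\tilde x_j)+h(u)+\frac\mu2\|u-\tilde x_j\|^2$, $\gamma_j(u)=\tilde\gamma_j(\tilde y_{j+1})+L\langle\tilde x_j-\tilde y_{j+1},u-\tilde y_{j+1}\rangle+\frac\mu2\|u-\tilde y_{j+1}\|^2$, $\Gamma_0\equiv0$, $\Gamma_{j+1}=(A_j\Gamma_j+a_j\gamma_j)/A_{j+1}$. *)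

theory Defs
  imports "HOL-Analysis.Analysis"
begin

definition epigraph :: "('a \<Rightarrow> ereal) \<Rightarrow> ('a \<times> real) set" where
  "epigraph h = {(x, t). h x \<le> ereal t}"

definition proper_fun :: "('a \<Rightarrow> ereal) \<Rightarrow> bool" where
  "proper_fun h \<longleftrightarrow> (\<forall>x. h x \<noteq> -\<infinity>) \<and> (\<exists>x. h x < \<infinity>)"

definition closed_convex_proper ::
  "('a::real_normed_vector \<Rightarrow> ereal) \<Rightarrow> bool" where
  "closed_convex_proper h \<longleftrightarrow> proper_fun h \<and> convex (epigraph h) \<and> closed (epigraph h)"

definition lin_approx :: "('a::real_inner \<Rightarrow> real) \<Rightarrow> ('a \<Rightarrow> 'a) \<Rightarrow> 'a \<Rightarrow> 'a \<Rightarrow> real" where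
  "lin_approx g dg x u = g x + inner (dg x) (u - x)"

end

theory Submission
  imports Defs
begin

text \<open>
  Each lower model \<open>\<gamma>\<^sub>i\<close> minorizes \<open>\<psi>\<close> on \<open>dom h\<close> (by convexity of \<open>f\<close> and the optimality
  condition defining \<open>yt (Suc i)\<close>), hence so does \<open>\<Gamma>\<^sub>j\<close>, while the \<open>(L + \<mu>)\<close>-smoothness of \<open>g\<close>
  yields the estimate-sequence invariant \<open>A\<^sub>j \<psi>(y j) \<le> A\<^sub>j \<Gamma>\<^sub>j(u) + \<parallel>u - x0\<parallel>\<^sup>2/2\<close> for every \<open>u\<close>.
  Moreover \<open>\<Gamma>\<^sub>j\<close> is a quadratic with Hessian \<open>\<mu>\<close> whose minimizer \<open>xh\<close> satisfies
  \<open>(\<lambda> + A\<^sub>j) x j = A\<^sub>j xh + \<lambda> x0\<close>. The invariant at \<open>u = x j\<close> gives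
  \<open>\<psi>(y j) \<le> \<Gamma>\<^sub>j(xh) + \<parallel>xh - x0\<parallel>\<^sup>2/(2(\<lambda> + A\<^sub>j))\<close>, the first half of (a); together with
  \<open>\<Gamma>\<^sub>j(y j) = \<Gamma>\<^sub>j(xh) + \<mu>\<parallel>y j - xh\<parallel>\<^sup>2/2 \<le> \<psi>(y j)\<close> it gives
  \<open>\<parallel>y j - xh\<parallel> \<le> \<surd>(\<lambda>/(\<lambda> + A\<^sub>j)) \<parallel>xh - x0\<parallel>\<close>, a factor of at most \<open>1/2\<close> when \<open>A\<^sub>j \<ge> 3\<lambda>\<close>.
  The triangle inequality through \<open>y j\<close> then bounds \<open>\<parallel>xh - x0\<parallel>\<close> by \<open>\<parallel>y j - x0\<parallel>\<close>, which yields
  the rest of (a) and, since \<open>\<parallel>v\<^sub>j\<parallel> = \<parallel>xh - x0\<parallel>/(\<lambda> + A\<^sub>j)\<close>, also (b).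
\<close>

section \<open>Smooth convex functions and proximal optimality\<close>

lemma norm_diff_power2_split:
  fixes u v w :: "'a::real_inner"
  shows "norm (u - w)^2 = norm (u - v)^2 + 2 * inner (u - v) (v - w) + norm (v - w)^2"
  using dot_norm[of "u - v" "v - w"] by simp

lemma has_real_derivative_along_line:
  fixes f :: "'a::real_inner \<Rightarrow> real"
  assumes "\<And>u. (f has_derivative (\<lambda>v. inner (df u) v)) (at u)"
  shows "((\<lambda>t. f (x + t *\<^sub>R d)) has_real_derivative inner (df (x + t *\<^sub>R d)) d) (at t)"
proof -
  have "((\<lambda>t. x + t *\<^sub>R d) has_derivative (\<lambda>s. s *\<^sub>R d)) (at t)"
    by (auto intro!: derivative_eq_intros)
  from has_derivative_compose[OF this assms]
  have "((\<lambda>t. f (x + t *\<^sub>R d)) has_derivative (\<lambda>s. inner (df (x + t *\<^sub>R d)) d * s)) (at t)"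
    by (simp add: mult.commute)
  then show ?thesis
    by (simp add: has_field_derivative_def)
qed

lemma lipschitz_gradient_upper_bound:
  fixes f :: "'a::real_inner \<Rightarrow> real"
  assumes grad: "\<And>u. (f has_derivative (\<lambda>v. inner (df u) v)) (at u)"
    and lip: "\<And>u w. norm (df u - df w) \<le> L * norm (u - w)"
  shows "f u \<le> lin_approx f df x u + L / 2 * norm (u - x)^2"
proof -
  define d where "d = u - x"
  define p where "p = (\<lambda>t. f (x + t *\<^sub>R d) - t * inner (df x) d - L / 2 * t^2 * norm d ^ 2)"
  have "p 1 \<le> p 0"
  proof (rule DERIV_nonpos_imp_nonincreasing[of 0 1 p])
    fix t :: real assume t: "0 \<le> t" "t \<le> 1"
    have "DERIV p t :> inner (df (x + t *\<^sub>R d)) d - inner (df x) d - L / 2 * (2 * t) * norm d ^ 2"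
      unfolding p_def
      by (auto intro!: derivative_eq_intros has_real_derivative_along_line[OF grad])
    then have D: "DERIV p t :> inner (df (x + t *\<^sub>R d) - df x) d - L * t * norm d ^ 2"
      by (simp add: inner_diff_left)
    have "inner (df (x + t *\<^sub>R d) - df x) d \<le> norm (df (x + t *\<^sub>R d) - df x) * norm d"
      by (rule norm_cauchy_schwarz)
    also have "\<dots> \<le> L * norm (t *\<^sub>R d) * norm d"
      using lip[of "x + t *\<^sub>R d" x] by (simp add: mult_right_mono)
    also have "\<dots> = L * t * norm d ^ 2"
      using t by (simp add: power2_eq_square)
    finally show "\<exists>y. DERIV p t :> y \<and> y \<le> 0"
      using D by auto
  qed simp
  then show ?thesis
    by (simp add: p_def d_def lin_approx_def)
qed

lemma convex_on_along_line:
  assumes "convex_on UNIV f"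
  shows "convex_on UNIV (\<lambda>t::real. f (x + t *\<^sub>R d))"
proof (rule convex_onI)
  fix u s t :: real assume u: "0 < u" "u < 1"
  have "x + ((1 - u) *\<^sub>R s + u *\<^sub>R t) *\<^sub>R d = (1 - u) *\<^sub>R (x + s *\<^sub>R d) + u *\<^sub>R (x + t *\<^sub>R d)"
    by (simp add: algebra_simps)
  then show "f (x + ((1 - u) *\<^sub>R s + u *\<^sub>R t) *\<^sub>R d)
      \<le> (1 - u) * f (x + s *\<^sub>R d) + u * f (x + t *\<^sub>R d)"
    using convex_onD[OF assms, of u] u by simp
qed simp

lemma lin_approx_le_convex:
  fixes f :: "'a::real_inner \<Rightarrow> real"
  assumes cvx: "convex_on UNIV f"
    and grad: "\<And>u. (f has_derivative (\<lambda>v. inner (df u) v)) (at u)"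
  shows "lin_approx f df x u \<le> f u"
proof -
  have "inner (df (x + 0 *\<^sub>R (u - x))) (u - x) * (1 - 0)
      \<le> f (x + 1 *\<^sub>R (u - x)) - f (x + 0 *\<^sub>R (u - x))"
    by (rule convex_on_imp_above_tangent[OF convex_on_along_line[OF cvx]])
        (use has_real_derivative_along_line[OF grad, of x "u - x" 0] in auto)
  then show ?thesis
    by (simp add: lin_approx_def)
qed

lemma epigraph_convex_combination_le:
  assumes "convex (epigraph h)" "h a = ereal ha" "h b = ereal hb" "0 \<le> t" "t \<le> 1"
  shows "h ((1 - t) *\<^sub>R a + t *\<^sub>R b) \<le> ereal ((1 - t) * ha + t * hb)"
proof -
  have "(a, ha) \<in> epigraph h" "(b, hb) \<in> epigraph h"
    using assms by (auto simp: epigraph_def)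
  from convexD[OF assms(1) this, of "1 - t" t] assms(4,5)
  show ?thesis by (simp add: epigraph_def)
qed

lemma prox_minimizer_variational_inequality:
  fixes b z yt u :: "'a::real_inner" and h :: "'a \<Rightarrow> ereal" and c K :: real
  defines "Q \<equiv> \<lambda>w. c + inner b (w - z) + K / 2 * norm (w - z)^2"
  assumes cvx: "convex (epigraph h)"
    and min: "\<And>w. ereal (Q yt) + h yt \<le> ereal (Q w) + h w"
    and hyt: "h yt = ereal hy" and hu: "h u = ereal hu"
  shows "0 \<le> inner (b + K *\<^sub>R (yt - z)) (u - yt) + hu - hy"
proof -
  define V where "V = inner (b + K *\<^sub>R (yt - z)) (u - yt) + hu - hy"
  have "0 \<le> V + t * (K / 2 * norm (u - yt)^2)" if t: "0 < t" "t < 1" for t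
  proof -
    define w where "w = yt + t *\<^sub>R (u - yt)"
    have "ereal (Q yt + hy) \<le> ereal (Q w) + h w"
      using min[of w] hyt by simp
    also have "\<dots> \<le> ereal (Q w) + ereal ((1 - t) * hy + t * hu)"
      using epigraph_convex_combination_le[OF cvx hyt hu, of t] t
      by (intro add_left_mono) (simp add: w_def algebra_simps)
    finally have le: "Q yt + hy \<le> Q w + ((1 - t) * hy + t * hu)"
      by simp
    have "Q w = Q yt + t * inner (b + K *\<^sub>R (yt - z)) (u - yt) + t^2 * (K / 2 * norm (u - yt)^2)"
      unfolding Q_def w_def power2_norm_eq_inner
      by (simp add: inner_add_left inner_add_right inner_diff_left inner_diff_right inner_commute
          algebra_simps power2_eq_square)
    with le have "0 \<le> t * (V + t * (K / 2 * norm (u - yt)^2))"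
      by (simp add: V_def algebra_simps power2_eq_square)
    with t show ?thesis
      by (simp add: zero_le_mult_iff)
  qed
  then have "\<forall>\<^sub>F t in at_right 0. 0 \<le> V + t * (K / 2 * norm (u - yt)^2)"
    by (intro eventually_at_rightI[of 0 1]) auto
  moreover have "((\<lambda>t. V + t * (K / 2 * norm (u - yt)^2)) \<longlongrightarrow> V) (at_right 0)"
    by (auto intro!: tendsto_eq_intros)
  ultimately show ?thesis
    unfolding V_def[symmetric] by (intro tendsto_lowerbound) auto
qed

lemma quadratic_combination_recentre:
  fixes z z' y P :: "'a::real_inner"
  assumes c': "c' = c + a * m" and z': "c' *\<^sub>R z' = c *\<^sub>R z - a *\<^sub>R P + (a * m) *\<^sub>R y"
  obtains K where "\<And>u. c / 2 * norm (u - z)^2 + a * (inner P u + m / 2 * norm (u - y)^2)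
                         = c' / 2 * norm (u - z')^2 + K"
proof
  fix u
  have "c' * inner u z' = c * inner u z - a * inner u P + a * m * inner u y"
    using arg_cong[OF z', of "inner u"] by (simp add: inner_diff_right inner_add_right)
  then show "c / 2 * norm (u - z)^2 + a * (inner P u + m / 2 * norm (u - y)^2)
      = c' / 2 * norm (u - z')^2 + (c / 2 * norm z^2 + a * m / 2 * norm y^2 - c' / 2 * norm z'^2)"
    unfolding power2_norm_eq_inner c'
    by (simp add: inner_diff_left inner_diff_right inner_commute field_simps)
qed

lemma estimate_sequence_step:
  fixes x y u xt yt :: "'a::real_inner"
  assumes A': "A' = A + a" "0 < A'" and xt: "A' *\<^sub>R xt = A *\<^sub>R y + a *\<^sub>R x"
    and c: "c * A' = L * a^2" and L: "0 \<le> L"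
  shows "A' * (L / 2 * norm (xt - yt)^2)
     \<le> A * (L * inner (xt - yt) (y - yt)) + a * (L * inner (xt - yt) (u - yt))
        + c / 2 * norm (u - x)^2"
proof -
  define P where "P = xt - yt"
  have "A * inner P y + a * inner P x = A' * inner P xt"
    using arg_cong[OF xt, of "inner P"] by (simp add: inner_add_right)
  then have split:
    "A * inner P (y - yt) + a * inner P (u - yt) = A' * norm P^2 + a * inner P (u - x)"
    unfolding power2_norm_eq_inner A'(1) P_def
    by (simp add: inner_diff_right inner_diff_left algebra_simps)
  have square: "L / (2 * A') * norm (A' *\<^sub>R P + a *\<^sub>R (u - x))^2
      = L * A' / 2 * norm P^2 + L * a * inner P (u - x) + L * a^2 / (2 * A') * norm (u - x)^2"
    unfolding power2_norm_eq_inner using A'(2)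
    apply (simp add: inner_add_left inner_add_right)
    apply (simp add: field_simps power2_eq_square inner_commute)
    done
  have c_half: "c / 2 * norm (u - x)^2 = L * a^2 / (2 * A') * norm (u - x)^2"
    using c A'(2) by (simp add: field_simps)
  have "A' * (L / 2 * norm P^2)
      \<le> A' * (L / 2 * norm P^2) + L / (2 * A') * norm (A' *\<^sub>R P + a *\<^sub>R (u - x))^2"
    using L A'(2) by simp
  also have "\<dots> = L * (A' * norm P^2 + a * inner P (u - x)) + L * a^2 / (2 * A') * norm (u - x)^2"
    unfolding square by (simp add: algebra_simps)
  also have "\<dots> = A * (L * inner P (y - yt)) + a * (L * inner P (u - yt)) + c / 2 * norm (u - x)^2"
    unfolding split[symmetric] c_half by (simp add: algebra_simps)
  finally show ?thesis
    unfolding P_def .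
qed

lemma le_sqrt_mult_of_power2_le:
  fixes F k N :: real
  assumes "F^2 \<le> k * N^2" "0 \<le> N"
  shows "F \<le> sqrt k * N"
  using real_le_rsqrt[OF assms(1)] assms(2) by (simp add: real_sqrt_mult)

lemma triangle_square_bound:
  fixes lam A N E F :: real
  assumes lam: "0 < lam" and A: "2 * lam < A" and N: "0 \<le> N"
    and F: "F^2 \<le> lam / A * N^2" and tri: "N \<le> E + F"
  shows "N^2 / (2 * A) \<le> E^2 / (A - 2 * lam)"
proof -
  define s where "s = sqrt (lam / A)"
  have A_pos: "0 < A" using lam A by linarith
  have s2: "s^2 = lam / A" and s_nonneg: "0 \<le> s"
    using lam A_pos by (simp_all add: s_def)
  have "s^2 < 1" using s2 lam A A_pos by simp
  then have "s < 1" using s_nonneg by (simp add: power_less_one_iff abs_square_less_1)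
  have "(1 - s) * N \<le> E"
    using tri le_sqrt_mult_of_power2_le[OF F N] by (simp add: s_def algebra_simps)
  then have "((1 - s) * N)^2 \<le> E^2"
    using \<open>s < 1\<close> N by (intro power_mono) auto
  then have E2: "(1 - s)^2 * N^2 \<le> E^2"
    by (simp add: power_mult_distrib)
  have "A - 2 * lam + A * (1 - 2 * s)^2 = 2 * A * (1 - s)^2"
    using s2 A_pos by (simp add: field_simps power2_eq_square)
  moreover have "0 \<le> A * (1 - 2 * s)^2"
    using A_pos by simp
  ultimately have "A - 2 * lam \<le> 2 * A * (1 - s)^2"
    by linarith
  then have "N^2 * (A - 2 * lam) \<le> N^2 * (2 * A * (1 - s)^2)"
    by (simp add: mult_left_mono)
  also have "\<dots> \<le> 2 * A * E^2"
    using E2 A_pos by (simp add: algebra_simps mult_left_mono)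
  finally show ?thesis
    using A_pos A by (simp add: divide_simps mult.commute)
qed

lemma triangle_linear_bound:
  fixes lam A N E F :: real
  assumes lam: "0 < lam" and A: "3 * lam \<le> A" and N: "0 \<le> N"
    and F: "F^2 \<le> lam / (lam + A) * N^2" and tri: "N \<le> E + F"
  shows "N / (lam + A) \<le> 3 * E / (2 * A)"
proof -
  define r where "r = sqrt (lam / (lam + A))"
  have A_pos: "0 < A" using lam A by linarith
  have r2: "r^2 = lam / (lam + A)" and r_nonneg: "0 \<le> r"
    using lam A_pos by (simp_all add: r_def)
  have "r^2 \<le> (1/2)^2"
    unfolding r2 using lam A by (simp add: divide_simps)
  then have "r \<le> 1/2" using r_nonneg by (simp add: power2_le_iff_abs_le)
  have EN: "(1 - r) * N \<le> E"
    using tri le_sqrt_mult_of_power2_le[OF F N] by (simp add: r_def algebra_simps)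
  have "A = (1 + r) * ((1 - r) * (lam + A))"
    using r2 lam A_pos by (simp add: field_simps power2_eq_square)
  moreover have "2 * ((1 + r) * ((1 - r) * (lam + A))) \<le> 3 * ((1 - r) * (lam + A))"
    using \<open>r \<le> 1/2\<close> lam A_pos
    by (intro mult_right_mono[of "2 * (1 + r)", simplified mult.assoc]) auto
  ultimately have "2 * A \<le> 3 * ((1 - r) * (lam + A))"
    by linarith
  from mult_left_mono[OF this N]
  have "N * (2 * A) \<le> 3 * (lam + A) * ((1 - r) * N)"
    by (simp add: ac_simps)
  also have "\<dots> \<le> 3 * (lam + A) * E"
    using EN lam A_pos by (intro mult_left_mono) auto
  finally show ?thesis
    using A_pos lam by (simp add: divide_simps algebra_simps)
qed

section \<open>ACG applied to the proximal subproblem\<close>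

text \<open>Since \<open>real_of_ereal \<infinity> = 0\<close>, \<open>psi_real\<close> agrees with \<open>\<psi>\<close>
  only on \<open>dom h\<close>.\<close>

locale acg_prox =
  fixes f :: "'a::real_inner \<Rightarrow> real" and df :: "'a \<Rightarrow> 'a" and h :: "'a \<Rightarrow> ereal"
    and L lam :: real and x0 :: 'a and g :: "'a \<Rightarrow> real" and dg :: "'a \<Rightarrow> 'a"
    and psi :: "'a \<Rightarrow> ereal" and mu :: real and A a tau :: "nat \<Rightarrow> real"
    and x y xt yt :: "nat \<Rightarrow> 'a" and Gam :: "nat \<Rightarrow> 'a \<Rightarrow> real"
  assumes f_convex: "convex_on UNIV f"
    and f_grad: "\<And>u. (f has_derivative (\<lambda>v. inner (df u) v)) (at u)"
    and f_smooth: "\<And>u w. norm (df u - df w) \<le> L * norm (u - w)"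
    and L_pos: "0 < L"
    and h_proper: "proper_fun h"
    and h_convex: "convex (epigraph h)"
    and lam_pos: "0 < lam"
    and g_def: "g = (\<lambda>u. f u + norm (u - x0)^2 / (2 * lam))"
    and dg_def: "dg = (\<lambda>u. df u + (1 / lam) *\<^sub>R (u - x0))"
    and mu_def: "mu = 1 / lam"
    and psi_def: "psi = (\<lambda>u. ereal (g u) + h u)"
    and A0: "A 0 = 0" and tau0: "tau 0 = 1 / L" and x0_init: "x 0 = x0"
    and a_def: "\<And>i. a i = (tau i + sqrt ((tau i)^2 + 4 * tau i * A i)) / 2"
    and tau_rec: "\<And>i. tau (Suc i) = tau i + mu * a i / L"
    and A_rec: "\<And>i. A (Suc i) = A i + a i"
    and xt_def: "\<And>i. xt i = (A i / A (Suc i)) *\<^sub>R y i + (a i / A (Suc i)) *\<^sub>R x i"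
    and yt_min: "\<And>i u. ereal (lin_approx g dg (xt i) (yt (Suc i))
                          + (L + mu) / 2 * norm (yt (Suc i) - xt i)^2) + h (yt (Suc i))
                     \<le> ereal (lin_approx g dg (xt i) u + (L + mu) / 2 * norm (u - xt i)^2) + h u"
    and y_le_yt: "\<And>i. psi (y (Suc i)) \<le> psi (yt (Suc i))"
    and x_rec: "\<And>i. x (Suc i) = (1 / (A (Suc i) * mu + 1)) *\<^sub>R
                   (((L + mu) * a i) *\<^sub>R yt (Suc i) - (A i * a i * L / A (Suc i)) *\<^sub>R y i)"
    and Gam0: "Gam 0 = (\<lambda>u. 0)"
    and Gam_rec: "\<And>i u. Gam (Suc i) u =
        (A i * Gam i u
         + a i * ( (lin_approx g dg (xt i) (yt (Suc i)) + real_of_ereal (h (yt (Suc i)))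
                     + mu / 2 * norm (yt (Suc i) - xt i)^2)
                   + L * inner (xt i - yt (Suc i)) (u - yt (Suc i))
                   + mu / 2 * norm (u - yt (Suc i))^2 )) / A (Suc i)"
begin

definition gamma :: "nat \<Rightarrow> 'a \<Rightarrow> real" where
  "gamma i u = (lin_approx g dg (xt i) (yt (Suc i)) + real_of_ereal (h (yt (Suc i)))
                  + mu / 2 * norm (yt (Suc i) - xt i)^2)
               + L * inner (xt i - yt (Suc i)) (u - yt (Suc i))
               + mu / 2 * norm (u - yt (Suc i))^2"

definition psi_real :: "'a \<Rightarrow> real" where
  "psi_real u = g u + real_of_ereal (h u)"

lemma mu_pos: "0 < mu"
  using lam_pos by (simp add: mu_def)

lemma tau_mult_L: "tau i * L = 1 + A i * mu"
proof (induction i)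
  case 0
  then show ?case using A0 tau0 L_pos by simp
next
  case (Suc i)
  then show ?case using tau_rec[of i] A_rec[of i] L_pos by (simp add: algebra_simps)
qed

lemma a_pos_if_A_nonneg:
  assumes "0 \<le> A i"
  shows "0 < a i"
proof -
  have "0 < tau i * L"
    unfolding tau_mult_L using assms mu_pos by (simp add: add_pos_nonneg)
  then have "0 < tau i"
    using L_pos by (simp add: zero_less_mult_iff)
  then show ?thesis
    using assms by (simp add: a_def add_pos_nonneg)
qed

lemma A_nonneg: "0 \<le> A i"
  by (induction i) (simp_all add: A0 A_rec a_pos_if_A_nonneg add_nonneg_pos less_imp_le)

lemma a_pos: "0 < a i"
  by (rule a_pos_if_A_nonneg[OF A_nonneg])

lemma A_Suc_pos: "0 < A (Suc i)"
  using A_nonneg[of i] a_pos[of i] by (simp add: A_rec)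

lemma L_mult_a_square: "L * (a i)^2 = (1 + A i * mu) * A (Suc i)"
proof -
  have "0 \<le> tau i * L"
    unfolding tau_mult_L using A_nonneg[of i] mu_pos by simp
  then have "0 \<le> tau i"
    using L_pos by (simp add: zero_le_mult_iff)
  then have "(sqrt ((tau i)^2 + 4 * tau i * A i))^2 = (tau i)^2 + 4 * tau i * A i"
    using A_nonneg[of i] by simp
  then have "(a i)^2 = tau i * A (Suc i)"
    unfolding a_def A_rec by (simp add: power2_eq_square field_simps)
  then show ?thesis
    by (simp add: tau_mult_L[symmetric])
qed

lemma xt_combination: "A (Suc i) *\<^sub>R xt i = A i *\<^sub>R y i + a i *\<^sub>R x i"
  using A_Suc_pos[of i] by (simp add: xt_def scaleR_add_right)

lemma x_Suc_combination:
  "(1 + A (Suc i) * mu) *\<^sub>R x (Suc i)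
     = (1 + A i * mu) *\<^sub>R x i - (a i * L) *\<^sub>R (xt i - yt (Suc i)) + (a i * mu) *\<^sub>R yt (Suc i)"
proof -
  have "0 < 1 + A (Suc i) * mu"
    using A_Suc_pos[of i] mu_pos by (simp add: add_pos_pos)
  then have "(1 + A (Suc i) * mu) *\<^sub>R x (Suc i)
      = ((L + mu) * a i) *\<^sub>R yt (Suc i) - (A i * a i * L / A (Suc i)) *\<^sub>R y i"
    by (simp add: x_rec add.commute)
  moreover have "(a i * L) *\<^sub>R xt i = (A i * a i * L / A (Suc i)) *\<^sub>R y i + (1 + A i * mu) *\<^sub>R x i"
  proof -
    have "(1 + A i * mu) = L * (a i)^2 / A (Suc i)"
      using L_mult_a_square[of i] A_Suc_pos[of i] by (simp add: field_simps)
    then show ?thesis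
      using A_Suc_pos[of i] by (simp add: xt_def scaleR_add_right power2_eq_square mult_ac)
  qed
  ultimately show ?thesis
    by (simp add: algebra_simps)
qed

lemma lin_approx_g_eq:
  "lin_approx g dg v u + mu / 2 * norm (u - v)^2
     = lin_approx f df v u + norm (u - x0)^2 / (2 * lam)"
proof -
  have "norm (u - x0)^2 = norm (u - v)^2 + 2 * inner (v - x0) (u - v) + norm (v - x0)^2"
    using norm_diff_power2_split[of u x0 v] by (simp add: inner_commute)
  moreover have "inner (dg v) (u - v) = inner (df v) (u - v) + inner (v - x0) (u - v) / lam"
    by (simp add: dg_def inner_add_left)
  ultimately show ?thesis
    unfolding lin_approx_def mu_def using lam_pos by (simp add: g_def field_simps)
qed

lemma lin_approx_g_le: "lin_approx g dg v u + mu / 2 * norm (u - v)^2 \<le> g u"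
  using lin_approx_g_eq lin_approx_le_convex[OF f_convex f_grad, of v u] by (simp add: g_def)

lemma g_le_lin_approx: "g u \<le> lin_approx g dg v u + (L + mu) / 2 * norm (u - v)^2"
  using lin_approx_g_eq[of v u] lipschitz_gradient_upper_bound[OF f_grad f_smooth, of u v]
  by (simp add: g_def field_simps)

lemma h_neq_minf: "h u \<noteq> -\<infinity>"
  using h_proper by (simp add: proper_fun_def)

lemma h_yt_finite: "h (yt (Suc i)) \<noteq> \<infinity>"
proof
  assume inf: "h (yt (Suc i)) = \<infinity>"
  obtain w where "h w < \<infinity>"
    using h_proper by (auto simp: proper_fun_def)
  with yt_min[of i w] inf h_neq_minf[of w] show False
    by (cases "h w") auto
qed

lemma h_eq_ereal: "h u \<noteq> \<infinity> \<Longrightarrow> h u = ereal (real_of_ereal (h u))"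
  using h_neq_minf[of u] by (cases "h u") simp_all

lemma psi_eq_psi_real: "h u \<noteq> \<infinity> \<Longrightarrow> psi u = ereal (psi_real u)"
  using h_neq_minf[of u] by (cases "h u") (simp_all add: psi_def psi_real_def)

lemma h_y_finite: "h (y (Suc i)) \<noteq> \<infinity>"
  using y_le_yt[of i] psi_eq_psi_real[OF h_yt_finite] by (auto simp: psi_def)

lemma psi_real_y_le_yt: "psi_real (y (Suc i)) \<le> psi_real (yt (Suc i))"
  using y_le_yt[of i] psi_eq_psi_real[OF h_yt_finite] psi_eq_psi_real[OF h_y_finite] by simp

lemma yt_variational_inequality:
  assumes "h u \<noteq> \<infinity>"
  shows "0 \<le> inner (dg (xt i) + (L + mu) *\<^sub>R (yt (Suc i) - xt i)) (u - yt (Suc i))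
              + real_of_ereal (h u) - real_of_ereal (h (yt (Suc i)))"
proof (rule prox_minimizer_variational_inequality[OF h_convex])
  show "h (yt (Suc i)) = ereal (real_of_ereal (h (yt (Suc i))))" "h u = ereal (real_of_ereal (h u))"
    using h_eq_ereal[OF h_yt_finite] h_eq_ereal[OF assms] .
  show "ereal (g (xt i) + inner (dg (xt i)) (yt (Suc i) - xt i)
                 + (L + mu) / 2 * norm (yt (Suc i) - xt i)^2) + h (yt (Suc i))
        \<le> ereal (g (xt i) + inner (dg (xt i)) (w - xt i) + (L + mu) / 2 * norm (w - xt i)^2)
           + h w" for w
    using yt_min[of i w] by (simp add: lin_approx_def)
qed

text \<open>\<open>gamma i\<close> differs from the minorant \<open>\<ell>\<^sub>g(\<cdot>; xt i) + h + \<mu>/2\<parallel>\<cdot> - xt i\<parallel>\<^sup>2\<close> of \<open>\<psi>\<close>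
  exactly by the nonnegative quantity of the variational inequality.\<close>
lemma gamma_le_psi_real:
  assumes "h u \<noteq> \<infinity>"
  shows "gamma i u \<le> psi_real u"
proof -
  let ?V = "inner (dg (xt i) + (L + mu) *\<^sub>R (yt (Suc i) - xt i)) (u - yt (Suc i))
              + real_of_ereal (h u) - real_of_ereal (h (yt (Suc i)))"
  have "gamma i u + ?V
      = lin_approx g dg (xt i) u + mu / 2 * norm (u - xt i)^2 + real_of_ereal (h u)"
    unfolding gamma_def lin_approx_def norm_diff_power2_split[of u "xt i" "yt (Suc i)"]
    by (simp add: inner_add_left inner_diff_left inner_diff_right inner_commute algebra_simps)
  also have "\<dots> \<le> psi_real u"
    using lin_approx_g_le[of "xt i" u] by (simp add: psi_real_def)
  finally show ?thesis
    using yt_variational_inequality[OF assms, of i] by linarith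
qed

lemma psi_real_yt_le_gamma:
  "psi_real (yt (Suc i)) \<le> gamma i (yt (Suc i)) + L / 2 * norm (xt i - yt (Suc i))^2"
  using g_le_lin_approx[of "yt (Suc i)" "xt i"]
  unfolding psi_real_def gamma_def by (simp add: norm_minus_commute field_simps)

lemma gamma_ge_linear:
  "gamma i (yt (Suc i)) + L * inner (xt i - yt (Suc i)) (v - yt (Suc i)) \<le> gamma i v"
  using mu_pos by (simp add: gamma_def)

lemma A_Gam_Suc: "A (Suc i) * Gam (Suc i) u = A i * Gam i u + a i * gamma i u"
  using A_Suc_pos[of i] by (simp add: Gam_rec gamma_def)

lemma A_Gam_le_psi_real:
  assumes "h u \<noteq> \<infinity>"
  shows "A j * Gam j u \<le> A j * psi_real u"
proof (induction j)
  case 0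
  then show ?case by (simp add: A0)
next
  case (Suc i)
  have "A (Suc i) * Gam (Suc i) u = A i * Gam i u + a i * gamma i u"
    by (rule A_Gam_Suc)
  also have "\<dots> \<le> A i * psi_real u + a i * psi_real u"
    using Suc gamma_le_psi_real[OF assms, of i] a_pos[of i]
    by (intro add_mono[OF _ mult_left_mono]) auto
  also have "\<dots> = A (Suc i) * psi_real u"
    by (simp add: A_rec algebra_simps)
  finally show ?case .
qed

text \<open>The update rule for \<open>x\<close> is designed to make \<open>x j\<close> the centre of this quadratic.\<close>
lemma Gam_prox_quadratic:
  "\<exists>M. \<forall>u. A j * Gam j u + norm (u - x0)^2 / 2 = M + (1 + A j * mu) / 2 * norm (u - x j)^2"
proof (induction j)
  case 0
  then show ?case by (simp add: A0 Gam0 x0_init)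
next
  case (Suc i)
  then obtain M where
    M: "\<And>u. A i * Gam i u + norm (u - x0)^2 / 2 = M + (1 + A i * mu) / 2 * norm (u - x i)^2"
    by blast
  define P where "P = L *\<^sub>R (xt i - yt (Suc i))"
  define K where "K = gamma i (yt (Suc i)) - inner P (yt (Suc i))"
  have gamma: "gamma i u = K + (inner P u + mu / 2 * norm (u - yt (Suc i))^2)" for u
    by (simp add: gamma_def K_def P_def inner_diff_right algebra_simps)
  have "1 + A (Suc i) * mu = (1 + A i * mu) + a i * mu"
    by (simp add: A_rec algebra_simps)
  moreover have "(1 + A (Suc i) * mu) *\<^sub>R x (Suc i)
      = (1 + A i * mu) *\<^sub>R x i - a i *\<^sub>R P + (a i * mu) *\<^sub>R yt (Suc i)"
    using x_Suc_combination[of i] by (simp add: P_def)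
  ultimately obtain K' where K': "\<And>u. (1 + A i * mu) / 2 * norm (u - x i)^2
        + a i * (inner P u + mu / 2 * norm (u - yt (Suc i))^2)
      = (1 + A (Suc i) * mu) / 2 * norm (u - x (Suc i))^2 + K'"
    by (rule quadratic_combination_recentre) blast
  have "A (Suc i) * Gam (Suc i) u + norm (u - x0)^2 / 2
      = (M + a i * K + K') + (1 + A (Suc i) * mu) / 2 * norm (u - x (Suc i))^2" for u
    using A_Gam_Suc[of i u] M[of u] gamma[of u] K'[of u] by (simp add: algebra_simps)
  then show ?case
    by blast
qed

lemma Gam_prox_at_x:
  "A j * Gam j u + norm (u - x0)^2 / 2
     = A j * Gam j (x j) + norm (x j - x0)^2 / 2 + (1 + A j * mu) / 2 * norm (u - x j)^2"
proof -
  obtain M where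
    "\<And>u. A j * Gam j u + norm (u - x0)^2 / 2 = M + (1 + A j * mu) / 2 * norm (u - x j)^2"
    using Gam_prox_quadratic by blast
  from this[of u] this[of "x j"] show ?thesis
    by simp
qed

lemma A_gamma_y_le_psi_real: "A i * gamma i (y i) \<le> A i * psi_real (y i)"
proof (cases i)
  case 0
  then show ?thesis by (simp add: A0)
next
  case (Suc k)
  then show ?thesis
    using gamma_le_psi_real[OF h_y_finite[of k]] A_nonneg[of i] by (simp add: mult_left_mono)
qed

text \<open>The induction hypothesis is used only at \<open>u = x i\<close>, the minimizer of its right-hand side.\<close>
lemma psi_real_y_le_Gam_prox: "A j * psi_real (y j) \<le> A j * Gam j u + norm (u - x0)^2 / 2"
proof (induction j arbitrary: u)
  case 0
  then show ?case by (simp add: A0)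
next
  case (Suc i)
  define P where "P = xt i - yt (Suc i)"
  define c where "c = 1 + A i * mu"
  have "A (Suc i) * psi_real (y (Suc i)) \<le> A (Suc i) * psi_real (yt (Suc i))"
    using psi_real_y_le_yt A_Suc_pos by (simp add: less_imp_le)
  also have "\<dots> \<le> A (Suc i) * gamma i (yt (Suc i)) + A (Suc i) * (L / 2 * norm P^2)"
    using mult_left_mono[OF psi_real_yt_le_gamma[of i] less_imp_le[OF A_Suc_pos[of i]]]
    unfolding P_def by (simp add: algebra_simps)
  also have "\<dots> \<le> A (Suc i) * gamma i (yt (Suc i))
        + (A i * (L * inner P (y i - yt (Suc i))) + a i * (L * inner P (u - yt (Suc i)))
           + c / 2 * norm (u - x i)^2)"
    using estimate_sequence_step[OF A_rec A_Suc_pos xt_combination, where c = c and L = L]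
      L_mult_a_square[of i] L_pos
    by (simp add: P_def c_def mult.commute)
  also have "\<dots> = A i * (gamma i (yt (Suc i)) + L * inner P (y i - yt (Suc i)))
      + a i * (gamma i (yt (Suc i)) + L * inner P (u - yt (Suc i))) + c / 2 * norm (u - x i)^2"
    by (simp add: A_rec algebra_simps)
  also have "\<dots> \<le> A i * gamma i (y i) + a i * gamma i u + c / 2 * norm (u - x i)^2"
    using gamma_ge_linear A_nonneg[of i] a_pos[of i] unfolding P_def
    by (intro add_mono[OF add_mono[OF mult_left_mono mult_left_mono] order_refl])
      (auto simp: less_imp_le)
  also have "\<dots> \<le> A i * Gam i (x i) + norm (x i - x0)^2 / 2 + a i * gamma i u
      + c / 2 * norm (u - x i)^2"
    using A_gamma_y_le_psi_real[of i] Suc[of "x i"] by linarith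
  also have "\<dots> = A (Suc i) * Gam (Suc i) u + norm (u - x0)^2 / 2"
    using Gam_prox_at_x[of i u] A_Gam_Suc[of i u] by (simp add: c_def)
  finally show ?case .
qed

definition center :: "nat \<Rightarrow> 'a" where
  "center j = (1 / (A j * mu)) *\<^sub>R ((1 + A j * mu) *\<^sub>R x j - x0)"

text \<open>For \<open>j = 0\<close> the centre is the junk value \<open>0\<close>; the identity then holds because \<open>x 0 = x0\<close>.\<close>
lemma center_combination: "(A j * mu) *\<^sub>R center j = (1 + A j * mu) *\<^sub>R x j - x0"
proof (cases j)
  case 0
  then show ?thesis by (simp add: A0 x0_init)
next
  case (Suc i)
  then show ?thesis
    using A_Suc_pos[of i] mu_pos by (simp add: center_def)
qed

lemma A_Gam_quadratic: "\<exists>M. \<forall>u. A j * Gam j u = M + A j * mu / 2 * norm (u - center j)^2"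
proof -
  obtain M where
    M: "\<And>u. A j * Gam j u + norm (u - x0)^2 / 2 = M + (1 + A j * mu) / 2 * norm (u - x j)^2"
    using Gam_prox_quadratic by blast
  have "A j * mu = (1 + A j * mu) + 1 * -1"
    by simp
  moreover have "(A j * mu) *\<^sub>R center j = (1 + A j * mu) *\<^sub>R x j - 1 *\<^sub>R 0 + (1 * -1) *\<^sub>R x0"
    using center_combination[of j] by simp
  ultimately obtain K where K: "\<And>u. (1 + A j * mu) / 2 * norm (u - x j)^2
        + 1 * (inner 0 u + -1 / 2 * norm (u - x0)^2)
      = A j * mu / 2 * norm (u - center j)^2 + K"
    by (rule quadratic_combination_recentre) blast
  have "A j * Gam j u = (M + K) + A j * mu / 2 * norm (u - center j)^2" for u
    using M[of u] K[of u] by simp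
  then show ?thesis
    by blast
qed

end

section \<open>The minimizer of \<open>\<Gamma>\<^sub>j\<close>\<close>

locale acg_prox_minimizer = acg_prox +
  fixes j :: nat and xh :: 'a
  assumes j_pos: "1 \<le> j"
    and xh_min: "\<And>u. Gam j xh \<le> Gam j u"
begin

lemma A_j_pos: "0 < A j"
  using A_Suc_pos[of "j - 1"] j_pos by simp

lemma h_y_j_finite: "h (y j) \<noteq> \<infinity>"
  using h_y_finite[of "j - 1"] j_pos by simp

lemma xh_eq_center: "xh = center j"
proof -
  obtain M where M: "\<And>u. A j * Gam j u = M + A j * mu / 2 * norm (u - center j)^2"
    using A_Gam_quadratic by blast
  have "A j * Gam j xh \<le> A j * Gam j (center j)"
    using xh_min A_j_pos by simp
  then have "A j * mu / 2 * norm (xh - center j)^2 \<le> 0"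
    using M[of xh] M[of "center j"] by simp
  then show ?thesis
    using A_j_pos mu_pos by (simp add: mult_le_0_iff)
qed

lemma Gam_eq_at_xh: "Gam j u = Gam j xh + mu / 2 * norm (u - xh)^2"
proof -
  obtain M where "\<And>u. A j * Gam j u = M + A j * mu / 2 * norm (u - center j)^2"
    using A_Gam_quadratic by blast
  from this[of u] this[of xh] have "A j * Gam j u = A j * (Gam j xh + mu / 2 * norm (u - xh)^2)"
    by (simp add: xh_eq_center algebra_simps)
  then show ?thesis
    using A_j_pos by simp
qed

lemma x_j_combination: "(lam + A j) *\<^sub>R x j = A j *\<^sub>R xh + lam *\<^sub>R x0"
  using arg_cong[OF center_combination[of j], of "scaleR lam"] lam_pos
  by (simp add: xh_eq_center mu_def algebra_simps)

lemma norm_x_j_minus_xh: "norm (x j - xh) = lam / (lam + A j) * norm (xh - x0)"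
proof -
  have "(lam + A j) *\<^sub>R (x j - xh) = lam *\<^sub>R (x0 - xh)"
    using x_j_combination by (simp add: algebra_simps)
  then have "\<bar>lam + A j\<bar> * norm (x j - xh) = \<bar>lam\<bar> * norm (x0 - xh)"
    by (metis norm_scaleR)
  then show ?thesis
    using lam_pos A_j_pos by (simp add: norm_minus_commute field_simps)
qed

lemma norm_x_j_minus_x0: "norm (x j - x0) = A j / (lam + A j) * norm (xh - x0)"
proof -
  have "(lam + A j) *\<^sub>R (x j - x0) = A j *\<^sub>R (xh - x0)"
    using x_j_combination by (simp add: algebra_simps)
  then have "\<bar>lam + A j\<bar> * norm (x j - x0) = \<bar>A j\<bar> * norm (xh - x0)"
    by (metis norm_scaleR)
  then show ?thesis
    using lam_pos A_j_pos by (simp add: field_simps)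
qed

lemma psi_real_y_j_bound: "psi_real (y j) \<le> Gam j xh + norm (xh - x0)^2 / (2 * (lam + A j))"
proof -
  define N where "N = norm (xh - x0)"
  have "A j * psi_real (y j) \<le> A j * Gam j (x j) + norm (x j - x0)^2 / 2"
    by (rule psi_real_y_le_Gam_prox)
  also have "\<dots> = A j * Gam j xh
      + (A j / (2 * lam) * (lam / (lam + A j) * N)^2 + (A j / (lam + A j) * N)^2 / 2)"
    unfolding Gam_eq_at_xh[of "x j"] norm_x_j_minus_xh norm_x_j_minus_x0 N_def
    by (simp add: mu_def algebra_simps)
  also have "A j / (2 * lam) * (lam / (lam + A j) * N)^2 + (A j / (lam + A j) * N)^2 / 2
      = A j * N^2 * (lam + A j) / (2 * (lam + A j)^2)"
    using lam_pos A_j_pos by (simp add: power_mult_distrib power_divide field_simps) algebra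
  also have "\<dots> = A j * (N^2 / (2 * (lam + A j)))"
    using lam_pos A_j_pos by (simp add: power2_eq_square)
  finally have "A j * psi_real (y j) \<le> A j * (Gam j xh + N^2 / (2 * (lam + A j)))"
    by (simp add: algebra_simps)
  then show ?thesis
    using A_j_pos by (simp add: N_def)
qed

lemma dist_y_j_xh: "norm (y j - xh)^2 \<le> lam / (lam + A j) * norm (xh - x0)^2"
proof -
  have "Gam j (y j) \<le> psi_real (y j)"
    using A_Gam_le_psi_real[OF h_y_j_finite, of j] A_j_pos by (simp add: mult_le_cancel_left_pos)
  then have "mu / 2 * norm (y j - xh)^2 \<le> norm (xh - x0)^2 / (2 * (lam + A j))"
    using psi_real_y_j_bound Gam_eq_at_xh[of "y j"] by linarith
  then show ?thesis
    using lam_pos A_j_pos by (simp add: mu_def field_simps)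
qed

lemma norm_v_j: "norm ((1 / A j) *\<^sub>R (x0 - x j)) = norm (xh - x0) / (lam + A j)"
  unfolding norm_scaleR norm_minus_commute[of x0] norm_x_j_minus_x0
  using A_j_pos lam_pos by simp

end

theorem lemma2p7:
  fixes f :: "real^'n \<Rightarrow> real" and df :: "real^'n \<Rightarrow> real^'n"
    and h :: "real^'n \<Rightarrow> ereal"
    and L lam :: real and x0 :: "real^'n"
    and g :: "real^'n \<Rightarrow> real" and dg :: "real^'n \<Rightarrow> real^'n"
    and psi :: "real^'n \<Rightarrow> ereal" and mu :: real
    and A a tau :: "nat \<Rightarrow> real"
    and x y xt yt :: "nat \<Rightarrow> real^'n"
    and Gam :: "nat \<Rightarrow> real^'n \<Rightarrow> real"
    and j :: nat and xh :: "real^'n"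
  assumes f_convex: "convex_on UNIV f"
    and f_grad: "\<And>u. (f has_derivative (\<lambda>v. inner (df u) v)) (at u)"
    and f_smooth: "\<And>u w. norm (df u - df w) \<le> L * norm (u - w)"
    and L_pos: "0 < L"
    and h_ccp: "closed_convex_proper h"
    and lam_pos: "0 < lam"
    and g_def: "g = (\<lambda>u. f u + norm (u - x0)^2 / (2 * lam))"
    and dg_def: "dg = (\<lambda>u. df u + (1 / lam) *\<^sub>R (u - x0))"
    and mu_def: "mu = 1 / lam"
    and psi_def: "psi = (\<lambda>u. ereal (g u) + h u)"
    and A0: "A 0 = 0" and tau0: "tau 0 = 1 / L" and x0_init: "x 0 = x0" and y0: "y 0 = x0"
    and a_def: "\<And>i. a i = (tau i + sqrt ((tau i)^2 + 4 * tau i * A i)) / 2"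
    and tau_rec: "\<And>i. tau (Suc i) = tau i + mu * a i / L"
    and A_rec: "\<And>i. A (Suc i) = A i + a i"
    and xt_def: "\<And>i. xt i = (A i / A (Suc i)) *\<^sub>R y i + (a i / A (Suc i)) *\<^sub>R x i"
    and yt_min: "\<And>i u. ereal (lin_approx g dg (xt i) (yt (Suc i))
                          + (L + mu) / 2 * norm (yt (Suc i) - xt i)^2) + h (yt (Suc i))
                     \<le> ereal (lin_approx g dg (xt i) u + (L + mu) / 2 * norm (u - xt i)^2) + h u"
    and y_choice: "\<And>i. y (Suc i) \<in> {y i, yt (Suc i)}"
    and y_min: "\<And>i. psi (y (Suc i)) \<le> psi (y i) \<and> psi (y (Suc i)) \<le> psi (yt (Suc i))"
    and x_rec: "\<And>i. x (Suc i) = (1 / (A (Suc i) * mu + 1)) *\<^sub>R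
                   (((L + mu) * a i) *\<^sub>R yt (Suc i) - (A i * a i * L / A (Suc i)) *\<^sub>R y i)"
    and Gam0: "Gam 0 = (\<lambda>u. 0)"
    and Gam_rec: "\<And>i u. Gam (Suc i) u =
        (A i * Gam i u
         + a i * ( (lin_approx g dg (xt i) (yt (Suc i)) + real_of_ereal (h (yt (Suc i)))
                     + mu / 2 * norm (yt (Suc i) - xt i)^2)
                   + L * inner (xt i - yt (Suc i)) (u - yt (Suc i))
                   + mu / 2 * norm (u - yt (Suc i))^2 )) / A (Suc i)"
    and j_pos: "1 \<le> j"
    and xh_min: "\<And>u. Gam j xh \<le> Gam j u"
    and A_big: "A j \<ge> 3 * lam"
  shows "psi (y j) - ereal (Gam j xh) \<le> ereal (norm (xh - x0)^2 / (2 * A j))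
       \<and> norm (xh - x0)^2 / (2 * A j) \<le> norm (y j - x0)^2 / (A j - 2 * lam)
       \<and> norm ((1 / A j) *\<^sub>R (x0 - x j)) \<le> 3 * norm (y j - x0) / (2 * A j)"
proof -
  interpret acg_prox_minimizer f df h L lam x0 g dg psi mu A a tau x y xt yt Gam j xh
    using assms by unfold_locales (auto simp: closed_convex_proper_def)
  define N E F where "N = norm (xh - x0)" and "E = norm (y j - x0)" and "F = norm (y j - xh)"
  have F_sq: "F^2 \<le> lam / (lam + A j) * N^2"
    using dist_y_j_xh by (simp add: F_def N_def)
  have triangle: "N \<le> E + F"
    using norm_triangle_ineq4[of "y j - x0" "y j - xh"] by (simp add: N_def E_def F_def)
  have "psi (y j) - ereal (Gam j xh) \<le> ereal (N^2 / (2 * A j))"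
  proof -
    have "N^2 / (2 * (lam + A j)) \<le> N^2 / (2 * A j)"
      using lam_pos A_j_pos by (intro divide_left_mono) auto
    then show ?thesis
      using psi_eq_psi_real[OF h_y_j_finite] psi_real_y_j_bound by (simp add: N_def)
  qed
  moreover have "N^2 / (2 * A j) \<le> E^2 / (A j - 2 * lam)"
  proof (rule triangle_square_bound[OF lam_pos _ _ _ triangle])
    have "lam / (lam + A j) * N^2 \<le> lam / A j * N^2"
      using lam_pos A_j_pos by (intro mult_right_mono divide_left_mono) auto
    then show "F^2 \<le> lam / A j * N^2"
      using F_sq by linarith
  qed (use A_big lam_pos in \<open>auto simp: N_def\<close>)
  moreover have "N / (lam + A j) \<le> 3 * E / (2 * A j)"
    by (rule triangle_linear_bound[OF lam_pos A_big _ F_sq triangle]) (simp add: N_def)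
  ultimately show ?thesis
    using norm_v_j by (simp add: N_def E_def)
qed

end
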